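(* Let $Q\subset\mathbb R^n$ be an $n$-dimensional convex polyhedral cone with apex (its unique $0$-face) at the origin. Let $Q_\circ=\{x: dist(x,Q)\le1\}$, let $\nu:\mathbb R^n\to Q$ be the nearest point projection, and for each open $k$-face $F^k$ of $Q$ let $G_k=\nu^{-1}(F^k)\cap\partial Q_\circ$ (closure taken), so that $G_k$ is isometric to $F^k\times F^k_\perp$ with $F^k_\perp$ a convex spherical polytope in a unit sphere $S^{n-k-1}$. Let $R\subset\partial Q_\circ$ be the union of all $G_k$ with $k\ne n-1$, with the Riemannian metric induced from $\mathbb R^n$; $R$ is an $(n-1)$-manifold with boundary whose boundary components are the sets corresponding to the boundaries of the $(n-1)$-faces of $Q$. Then any shortest path $\gamma\subset R$ between two different boundary components $\partial_1,\partial_2$ of $R$ is a geodesic segment contained in a single $G_k$ (or in an intersection of several such sets). Consequently, $$dist_R(\partial_1,\partial_2)=dist_{S^{n-1}}(\partial_1\cap S^{n-1},\;\partial_2\cap S^{n-1}),$$ where $S^{n-1}$ is the unit sphere centred at the apex and $dist_{S^{n-1}}$ is the spherical distance.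
   Context: A convex polyhedral cone is an intersection of finitely many closed half-spaces whose boundary hyperplanes pass through the origin. $G_0=\nu^{-1}(0)\cap\partial Q_\circ=\partial Q_\circ\cap S^{n-1}$. *)

theory Defs
  imports "HOL-Analysis.Analysis"
begin

definition path_length :: "(real \<Rightarrow> 'a::euclidean_space) \<Rightarrow> ereal" where
  "path_length g = (SUP ts \<in> {ts :: real list. sorted ts \<and> set ts \<subseteq> {0..1}}.
      ereal (\<Sum>i < length ts - 1. dist (g (ts ! i)) (g (ts ! Suc i))))"

definition intrinsic_setdist :: "'a::euclidean_space set \<Rightarrow> 'a set \<Rightarrow> 'a set \<Rightarrow> ereal" where
  "intrinsic_setdist R A B = (INF g \<in> {g. path g \<and> path_image g \<subseteq> R \<and>
      pathstart g \<in> A \<and> pathfinish g \<in> B}. path_length g)"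

definition shortest_path_in :: "'a::euclidean_space set \<Rightarrow> 'a set \<Rightarrow> 'a set \<Rightarrow> (real \<Rightarrow> 'a) \<Rightarrow> bool" where
  "shortest_path_in R A B g \<longleftrightarrow> path g \<and> path_image g \<subseteq> R \<and>
      pathstart g \<in> A \<and> pathfinish g \<in> B \<and> path_length g = intrinsic_setdist R A B"

definition sphere_setdist :: "'a::euclidean_space set \<Rightarrow> 'a set \<Rightarrow> real" where
  "sphere_setdist A B = Inf {arccos (x \<bullet> y) | x y. x \<in> A \<and> y \<in> B}"

definition Qo :: "'a::euclidean_space set \<Rightarrow> 'a set" where
  "Qo Q = {x. setdist {x} Q \<le> 1}"

definition Gset :: "'a::euclidean_space set \<Rightarrow> 'a set \<Rightarrow> 'a set" where
  "Gset Q F = closure ((closest_point Q -` rel_interior F) \<inter> frontier (Qo Q))"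

definition Rset :: "'a::euclidean_space set \<Rightarrow> 'a set" where
  "Rset Q = \<Union> {Gset Q F | F. F face_of Q \<and> aff_dim F \<noteq> int DIM('a) - 1}"

text \<open>Boundary component of R corresponding to the boundary of a facet F.\<close>
definition bdry_comp :: "'a::euclidean_space set \<Rightarrow> 'a set \<Rightarrow> 'a set" where
  "bdry_comp Q F = Rset Q \<inter> Gset Q F"

end

theory Submission
  imports Defs
begin

(* Write a point x of the boundary of Q_o as x = p + c with p = nu(x) in Q and c a unit outer
   normal of Q at p.  The nearest point projection is firmly nonexpansive,
   |x - y|^2 >= |nu x - nu y|^2 + |c x - c y|^2, so a path in R is at least as long as the curve
   traced by c on the unit sphere, and strictly longer when nu moves along the path.  Over a facet
   F_i the normal part is the unit facet normal n_i, which is also the only point of the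
   boundary component of F_i on the unit sphere; hence every path between the two boundary
   components has length at least the spherical distance arccos (n_1 . n_2).  The great arc from
   n_1 to n_2 lies in the polar cone of Q, i.e. in G_0, which is part of R, and attains the bound.
   A shortest path therefore has constant projection p, a common point of F_1 and F_2, and lies
   in G_F for the face F with p in its relative interior, which cannot be a facet. *)

section \<open>Angles between unit vectors\<close>

lemma inner_unit_bounds:
  fixes u v :: "'a::real_inner"
  assumes "norm u = 1" "norm v = 1"
  shows "-1 \<le> u \<bullet> v" "u \<bullet> v \<le> 1"
  using Cauchy_Schwarz_ineq2[of u v] assms by auto

lemma arccos_inner_self [simp]:
  fixes u :: "'a::real_inner"
  shows "norm u = 1 \<Longrightarrow> arccos (u \<bullet> u) = 0"
  by (simp add: dot_square_norm)

lemma arccos_inner_triangle: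
  fixes u v w :: "'a::real_inner"
  assumes u: "norm u = 1" and v: "norm v = 1" and w: "norm w = 1"
  shows "arccos (u \<bullet> w) \<le> arccos (u \<bullet> v) + arccos (v \<bullet> w)"
proof -
  define a b where "a = arccos (u \<bullet> v)" and "b = arccos (v \<bullet> w)"
  note uv = inner_unit_bounds[OF u v] and vw = inner_unit_bounds[OF v w]
    and uw = inner_unit_bounds[OF u w]
  have a: "0 \<le> a" "a \<le> pi" "cos a = u \<bullet> v"
    using uv by (auto simp: a_def arccos_lbound arccos_ubound)
  have b: "0 \<le> b" "b \<le> pi" "cos b = v \<bullet> w"
    using vw by (auto simp: b_def arccos_lbound arccos_ubound)
  have uu: "u \<bullet> u = 1" and vv: "v \<bullet> v = 1" and ww: "w \<bullet> w = 1"
    using u v w by (simp_all add: dot_square_norm)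
  \<comment> \<open>Cauchy-Schwarz for the components of u and w orthogonal to v gives cos (a + b) \<le> u \<bullet> w.\<close>
  define u' w' where "u' = u - (u \<bullet> v) *\<^sub>R v" and "w' = w - (v \<bullet> w) *\<^sub>R v"
  have "(norm u')\<^sup>2 = 1 - (cos a)\<^sup>2" "(norm w')\<^sup>2 = 1 - (cos b)\<^sup>2"
    unfolding a b u'_def w'_def power2_norm_eq_inner
    by (simp_all add: inner_diff inner_commute uu vv ww power2_eq_square algebra_simps)
  then have "(norm u')\<^sup>2 = (sin a)\<^sup>2" "(norm w')\<^sup>2 = (sin b)\<^sup>2"
    by (simp_all add: sin_squared_eq)
  then have "norm u' = sin a" "norm w' = sin b"
    using a b by (simp_all add: sin_ge_zero power2_eq_iff_nonneg)
  then have "\<bar>u' \<bullet> w'\<bar> \<le> sin a * sin b"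
    using Cauchy_Schwarz_ineq2[of u' w'] by simp
  moreover have "u \<bullet> w = u' \<bullet> w' + (u \<bullet> v) * (v \<bullet> w)"
    unfolding u'_def w'_def by (simp add: inner_diff inner_commute vv algebra_simps)
  ultimately have "cos (a + b) \<le> u \<bullet> w"
    using a b by (simp add: cos_add)
  show ?thesis
  proof (cases "a + b \<le> pi")
    case True
    have "arccos (u \<bullet> w) \<le> arccos (cos (a + b))"
      using \<open>cos (a + b) \<le> u \<bullet> w\<close> uw by (intro arccos_le_arccos) auto
    also have "\<dots> = a + b"
      using True a b by (simp add: arccos_cos)
    finally show ?thesis by (simp add: a_def b_def)
  next
    case False
    then show ?thesis
      using arccos_ubound[OF uw] by (simp add: a_def b_def)
  qed
qed

lemma dist_unit_eq_sin_half_arccos: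
  fixes u v :: "'a::real_inner"
  assumes u: "norm u = 1" and v: "norm v = 1"
  shows "dist u v = 2 * sin (arccos (u \<bullet> v) / 2)"
proof -
  define s where "s = arccos (u \<bullet> v) / 2"
  note uv = inner_unit_bounds[OF u v]
  have s: "0 \<le> s" "s \<le> pi / 2"
    using uv arccos_lbound arccos_ubound by (auto simp: s_def)
  have "u \<bullet> u = 1" "v \<bullet> v = 1"
    using u v by (simp_all add: dot_square_norm)
  then have "(dist u v)\<^sup>2 = 2 - 2 * (u \<bullet> v)"
    by (simp add: dist_norm power2_norm_eq_inner inner_diff inner_commute)
  also have "u \<bullet> v = cos (2 * s)"
    using uv by (simp add: s_def)
  finally have "(dist u v)\<^sup>2 = (2 * sin s)\<^sup>2"
    by (simp add: cos_double_sin power2_eq_square)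
  moreover have "0 \<le> 2 * sin s"
    using s by (simp add: sin_ge_zero)
  ultimately have "dist u v = 2 * sin s"
    using power2_eq_iff_nonneg[OF zero_le_dist] by blast
  then show ?thesis
    by (simp add: s_def)
qed

lemma dist_le_arccos_inner:
  fixes u v :: "'a::real_inner"
  assumes "norm u = 1" "norm v = 1"
  shows "dist u v \<le> arccos (u \<bullet> v)"
  using dist_unit_eq_sin_half_arccos[OF assms] sin_x_le_x[of "arccos (u \<bullet> v) / 2"]
    arccos_lbound[OF inner_unit_bounds[OF assms]] by simp

lemma x_cos_le_sin:
  fixes x :: real
  assumes "0 \<le> x" "x \<le> pi / 2"
  shows "x * cos x \<le> sin x"
proof (cases "x = 0")
  case False
  then have "0 < x" using assms by simp
  then obtain z where z: "0 < z" "z < x" "sin x - sin 0 = (x - 0) * cos z"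
    using MVT2[of 0 x sin cos] by (auto intro: DERIV_sin)
  have "cos x \<le> cos z"
    using z assms by (intro cos_monotone_0_pi_le) auto
  then show ?thesis
    using z \<open>0 < x\<close> by (simp add: mult_left_mono)
qed simp

lemma arccos_inner_le_chord:
  fixes u v :: "'a::real_inner"
  assumes "norm u = 1" "norm v = 1"
  shows "arccos (u \<bullet> v) * (1 - (dist u v)\<^sup>2 / 4) \<le> dist u v"
proof -
  define s where "s = arccos (u \<bullet> v) / 2"
  have s: "0 \<le> s" "s \<le> pi / 2"
    using inner_unit_bounds[OF assms] arccos_lbound arccos_ubound by (auto simp: s_def)
  have c: "0 \<le> cos s" "cos s \<le> 1"
    using s by (auto intro: cos_ge_zero)
  have "s * (cos s)\<^sup>2 \<le> s * cos s"
    using s c by (intro mult_left_mono) (auto simp: power2_eq_square mult_left_le_one_le)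
  also have "\<dots> \<le> sin s"
    using x_cos_le_sin[OF s] .
  finally have "2 * s * (1 - (sin s)\<^sup>2) \<le> 2 * sin s"
    by (simp add: cos_squared_eq)
  moreover have "arccos (u \<bullet> v) = 2 * s" "dist u v = 2 * sin s"
    using dist_unit_eq_sin_half_arccos[OF assms] by (simp_all add: s_def)
  ultimately show ?thesis
    by (simp add: power2_eq_square)
qed

text \<open>Short chords nearly recover the arc length: this is why inscribed polygons of small mesh
  approximate the length of a curve on the sphere.\<close>
lemma arccos_inner_le_dist_if_close:
  fixes u v :: "'a::real_inner"
  assumes "norm u = 1" "norm v = 1" "0 \<le> z" "z \<le> 1" "dist u v \<le> sqrt (1 - z)"
  shows "z * arccos (u \<bullet> v) \<le> dist u v"
proof -
  have "(dist u v)\<^sup>2 \<le> (sqrt (1 - z))\<^sup>2"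
    using assms(5) by (intro power_mono) auto
  then have "(dist u v)\<^sup>2 \<le> 1 - z"
    using assms(4) by simp
  then have "z \<le> 1 - (dist u v)\<^sup>2 / 4"
    using zero_le_power2[of "dist u v"] by linarith
  moreover have "0 \<le> arccos (u \<bullet> v)"
    using arccos_lbound inner_unit_bounds[OF assms(1,2)] by blast
  ultimately have "z * arccos (u \<bullet> v) \<le> arccos (u \<bullet> v) * (1 - (dist u v)\<^sup>2 / 4)"
    by (metis mult.commute mult_right_mono)
  also have "\<dots> \<le> dist u v"
    using arccos_inner_le_chord[OF assms(1,2)] .
  finally show ?thesis .
qed

lemma sphere_setdist_singletons [simp]: "sphere_setdist {x} {y} = arccos (x \<bullet> y)"
  unfolding sphere_setdist_def by simp

section \<open>Inscribed polygons and path length\<close>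

lemma triangle_chain_le_sum:
  fixes d :: "'a \<Rightarrow> 'a \<Rightarrow> real" and x :: "nat \<Rightarrow> 'a"
  assumes "d (x 0) (x 0) = 0"
    and "\<And>i. i < k \<Longrightarrow> d (x 0) (x (Suc i)) \<le> d (x 0) (x i) + d (x i) (x (Suc i))"
  shows "d (x 0) (x k) \<le> (\<Sum>i<k. d (x i) (x (Suc i)))"
  using assms(2)
proof (induction k)
  case (Suc k)
  then show ?case
    using Suc.prems[of k] by fastforce
qed (use assms(1) in simp)

definition grid_sum :: "nat \<Rightarrow> (real \<Rightarrow> 'a::metric_space) \<Rightarrow> real" where
  "grid_sum N f = (\<Sum>i<N. dist (f (real i / real N)) (f (real (Suc i) / real N)))"

lemma dist_le_grid_sum:
  assumes "k \<le> N"
  shows "dist (f 0) (f (real k / real N)) \<le> grid_sum N f"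
proof -
  have "dist (f 0) (f (real k / real N))
      \<le> (\<Sum>i<k. dist (f (real i / real N)) (f (real (Suc i) / real N)))"
    using triangle_chain_le_sum[of "\<lambda>a b. dist a b" "\<lambda>i. f (real i / real N)" k]
    by (simp add: dist_triangle)
  also have "\<dots> \<le> grid_sum N f"
    unfolding grid_sum_def using assms by (intro sum_mono2) auto
  finally show ?thesis .
qed

lemma path_length_nonneg: "0 \<le> path_length g"
  unfolding path_length_def by (rule SUP_upper2[of "[]"]) auto

lemma grid_sum_le_path_length:
  assumes "N > 0"
  shows "ereal (grid_sum N g) \<le> path_length g"
proof -
  define ts where "ts = map (\<lambda>i. real i / real N) [0..<Suc N]"
  have nth: "ts ! i = real i / real N" if "i \<le> N" for i
    using that by (simp add: ts_def nth_map del: upt_Suc)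
  have len: "length ts = Suc N"
    by (simp add: ts_def)
  have "sorted ts"
    unfolding sorted_iff_nth_mono len by (auto simp: nth divide_right_mono)
  moreover have "set ts \<subseteq> {0..1}"
    using assms by (auto simp: ts_def)
  moreover have "grid_sum N g = (\<Sum>i < length ts - 1. dist (g (ts ! i)) (g (ts ! Suc i)))"
    unfolding grid_sum_def len by (intro sum.cong) (auto simp: nth)
  ultimately show ?thesis
    unfolding path_length_def by (intro SUP_upper2[of ts]) auto
qed

lemma path_length_le_Lipschitz:
  fixes g :: "real \<Rightarrow> 'a::euclidean_space"
  assumes "0 \<le> L"
    and lip: "\<And>s t. s \<in> {0..1} \<Longrightarrow> t \<in> {0..1} \<Longrightarrow> dist (g s) (g t) \<le> L * \<bar>t - s\<bar>"
  shows "path_length g \<le> ereal L"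
  unfolding path_length_def
proof (rule SUP_least, safe)
  fix ts :: "real list"
  assume so: "sorted ts" and sub: "set ts \<subseteq> {0..1}"
  show "ereal (\<Sum>i < length ts - 1. dist (g (ts ! i)) (g (ts ! Suc i))) \<le> ereal L"
  proof (cases "ts = []")
    case False
    define m where "m = length ts - 1"
    have I: "ts ! i \<in> {0..1}" if "i \<le> m" for i
    proof -
      have "i < length ts"
        using that length_greater_0_conv[of ts] False unfolding m_def by linarith
      then show ?thesis
        using sub nth_mem by blast
    qed
    have "(\<Sum>i<m. dist (g (ts ! i)) (g (ts ! Suc i))) \<le> (\<Sum>i<m. L * (ts ! Suc i - ts ! i))"
    proof (intro sum_mono)
      fix i assume "i \<in> {..<m}"
      then have "ts ! i \<le> ts ! Suc i"
        using sorted_nth_mono[OF so] by (simp add: m_def)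
      then show "dist (g (ts ! i)) (g (ts ! Suc i)) \<le> L * (ts ! Suc i - ts ! i)"
        using lip[OF I I, of i "Suc i"] \<open>i \<in> {..<m}\<close> by simp
    qed
    also have "\<dots> = L * (ts ! m - ts ! 0)"
      by (simp add: sum_distrib_left[symmetric] sum_lessThan_telescope)
    also have "\<dots> \<le> L"
      using I[of m] I[of 0] assms(1) by (simp add: mult_left_le)
    finally show ?thesis by (simp add: m_def)
  qed (use assms(1) in simp)
qed

lemma path_length_ge_if_eventually:
  assumes "\<And>z. 0 < z \<Longrightarrow> z < 1 \<Longrightarrow> \<forall>\<^sub>F N in sequentially. z * x \<le> grid_sum N g"
  shows "ereal x \<le> path_length g"
proof (rule ereal_le_mult_one_interval)
  show "path_length g \<noteq> -\<infinity>"
    using path_length_nonneg[of g] by auto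
  fix z :: ereal assume z: "0 < z" "z < 1"
  then obtain r where r: "z = ereal r" "0 < r" "r < 1"
    by (cases z) auto
  have "\<forall>\<^sub>F N in sequentially. r * x \<le> grid_sum N g \<and> 0 < N"
    using assms[OF r(2,3)] eventually_gt_at_top by (rule eventually_conj)
  then obtain N where "N > 0" "r * x \<le> grid_sum N g"
    by (auto simp: eventually_sequentially)
  then show "z * ereal x \<le> path_length g"
    using grid_sum_le_path_length[of N g] r(1)
    by (metis ereal_less_eq(3) order_trans times_ereal.simps(1))
qed

lemma eventually_grid_mesh:
  fixes f :: "real \<Rightarrow> 'a::metric_space"
  assumes "continuous_on {0..1} f" "0 < r"
  shows "\<forall>\<^sub>F N in sequentially. \<forall>u\<in>{0..1}. \<forall>v\<in>{0..1}.
           \<bar>u - v\<bar> \<le> 1 / real N \<longrightarrow> dist (f u) (f v) < r"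
proof -
  obtain d where "0 < d"
    and d: "\<And>s t. s \<in> {0..1} \<Longrightarrow> t \<in> {0..1} \<Longrightarrow> dist s t < d \<Longrightarrow> dist (f s) (f t) < r"
    using compact_uniformly_continuous[OF assms(1) compact_Icc] assms(2)
    unfolding uniformly_continuous_on_def by metis
  have "\<forall>\<^sub>F N in sequentially. 1 / real N < d"
    using order_tendstoD(2)[OF lim_1_over_n \<open>0 < d\<close>] by simp
  then show ?thesis
    by eventually_elim (auto intro!: d simp: dist_real_def)
qed

lemma grid_sum_ge_arccos_eventually:
  fixes c :: "real \<Rightarrow> 'a::real_inner"
  assumes "continuous_on {0..1} c" and unit: "\<And>t. t \<in> {0..1} \<Longrightarrow> norm (c t) = 1"
    and "0 < z" "z < 1"
  shows "\<forall>\<^sub>F N in sequentially. z * arccos (c 0 \<bullet> c 1) \<le> grid_sum N c"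
proof -
  have "\<forall>\<^sub>F N in sequentially. (\<forall>u\<in>{0..1}. \<forall>v\<in>{0..1}.
          \<bar>u - v\<bar> \<le> 1 / real N \<longrightarrow> dist (c u) (c v) < sqrt (1 - z)) \<and> 0 < N"
    using eventually_grid_mesh[OF assms(1)] assms(4) eventually_gt_at_top
    by (intro eventually_conj) auto
  then show ?thesis
  proof eventually_elim
    case (elim N)
    let ?x = "\<lambda>i. c (real i / real N)"
    have x_unit: "norm (?x i) = 1" if "i \<le> N" for i
      using that elim unit by auto
    have step: "z * arccos (?x i \<bullet> ?x (Suc i)) \<le> dist (?x i) (?x (Suc i))" if "i < N" for i
    proof (rule arccos_inner_le_dist_if_close)
      have "\<bar>real i / real N - real (Suc i) / real N\<bar> = 1 / real N"
        using elim by (simp add: field_simps)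
      then show "dist (?x i) (?x (Suc i)) \<le> sqrt (1 - z)"
        using elim that by (auto intro: less_imp_le)
    qed (use that x_unit[of i] x_unit[of "Suc i"] assms(3,4) in auto)
    have "arccos (c 0 \<bullet> c 1) = arccos (?x 0 \<bullet> ?x N)"
      using elim by simp
    also have "\<dots> \<le> (\<Sum>i<N. arccos (?x i \<bullet> ?x (Suc i)))"
    proof (rule triangle_chain_le_sum[of "\<lambda>u v. arccos (u \<bullet> v)"])
      show "arccos (?x 0 \<bullet> ?x 0) = 0"
        using x_unit[of 0] by simp
      show "arccos (?x 0 \<bullet> ?x (Suc i)) \<le> arccos (?x 0 \<bullet> ?x i) + arccos (?x i \<bullet> ?x (Suc i))"
        if "i < N" for i
        using that by (intro arccos_inner_triangle x_unit) auto
    qed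
    finally have "z * arccos (c 0 \<bullet> c 1) \<le> (\<Sum>i<N. z * arccos (?x i \<bullet> ?x (Suc i)))"
      using assms(3) by (simp add: sum_distrib_left[symmetric])
    also have "\<dots> \<le> grid_sum N c"
      unfolding grid_sum_def by (intro sum_mono step) auto
    finally show ?case .
  qed
qed

lemma grid_sum_gt_eventually:
  fixes f :: "real \<Rightarrow> 'a::metric_space"
  assumes "continuous_on {0..1} f" "t \<in> {0..1}" "a < dist (f 0) (f t)"
  shows "\<forall>\<^sub>F N in sequentially. a < grid_sum N f"
proof -
  have "\<forall>\<^sub>F N in sequentially. (\<forall>u\<in>{0..1}. \<forall>v\<in>{0..1}.
          \<bar>u - v\<bar> \<le> 1 / real N \<longrightarrow> dist (f u) (f v) < dist (f 0) (f t) - a) \<and> 0 < N"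
    using eventually_grid_mesh[OF assms(1)] assms(3) eventually_gt_at_top
    by (intro eventually_conj) auto
  then show ?thesis
  proof eventually_elim
    case (elim N)
    define k where "k = nat \<lfloor>t * real N\<rfloor>"
    have k: "real k \<le> t * real N" "t * real N < real k + 1"
      using assms(2) by (auto simp: k_def)
    have "t * real N \<le> real N"
      using assms(2) by (simp add: mult_left_le_one_le)
    then have "k \<le> N"
      using k(1) of_nat_le_iff[of k N] by linarith
    have "real k / real N \<le> t"
      using k(1) elim by (simp add: divide_le_eq mult.commute)
    moreover have "t < real k / real N + 1 / real N"
      using k(2) elim by (simp add: less_divide_eq add_divide_distrib[symmetric] mult.commute)
    ultimately have "\<bar>real k / real N - t\<bar> \<le> 1 / real N"
      by simp
    then have "dist (f (real k / real N)) (f t) < dist (f 0) (f t) - a"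
      using elim assms(2) \<open>k \<le> N\<close> by auto
    moreover have "dist (f 0) (f t) \<le> dist (f 0) (f (real k / real N)) + dist (f (real k / real N)) (f t)"
      by (rule dist_triangle)
    moreover have "dist (f 0) (f (real k / real N)) \<le> grid_sum N f"
      using \<open>k \<le> N\<close> by (rule dist_le_grid_sum)
    ultimately show ?case by linarith
  qed
qed

section \<open>Great arcs\<close>

lemma inner_circle_points:
  fixes u e :: "'a::real_inner"
  assumes "u \<bullet> u = 1" "e \<bullet> e = 1" "u \<bullet> e = 0"
  shows "(cos a *\<^sub>R u + sin a *\<^sub>R e) \<bullet> (cos b *\<^sub>R u + sin b *\<^sub>R e) = cos (a - b)"
  using assms by (simp add: inner_add inner_commute cos_diff)

lemma path_length_circle_arc:
  fixes u e :: "'a::euclidean_space"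
  assumes "u \<bullet> u = 1" "e \<bullet> e = 1" "u \<bullet> e = 0" "0 \<le> \<theta>" "\<theta> \<le> pi"
  shows "path_length (\<lambda>t. cos (t * \<theta>) *\<^sub>R u + sin (t * \<theta>) *\<^sub>R e) \<le> ereal \<theta>"
proof (rule path_length_le_Lipschitz)
  let ?\<gamma> = "\<lambda>t. cos (t * \<theta>) *\<^sub>R u + sin (t * \<theta>) *\<^sub>R e"
  have unit: "norm (?\<gamma> t) = 1" for t
    using inner_circle_points[OF assms(1-3), of "t * \<theta>" "t * \<theta>"] by (simp add: norm_eq_sqrt_inner)
  fix s t :: real assume "s \<in> {0..1}" "t \<in> {0..1}"
  then have "\<theta> * \<bar>t - s\<bar> \<le> \<theta>"
    using assms(4) by (intro mult_right_le_one_le) auto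
  moreover have "\<bar>s * \<theta> - t * \<theta>\<bar> = \<theta> * \<bar>t - s\<bar>"
    using assms(4) by (simp add: abs_mult left_diff_distrib[symmetric] abs_minus_commute)
  ultimately show "dist (?\<gamma> s) (?\<gamma> t) \<le> \<theta> * \<bar>t - s\<bar>"
    using dist_le_arccos_inner[OF unit unit, of s t] assms(5)
    by (simp add: inner_circle_points[OF assms(1-3)] arccos_cos_eq_abs)
qed (use assms(4) in simp)

lemma unit_vectors_polar_frame:
  fixes u v :: "'a::real_inner"
  assumes u: "norm u = 1" and v: "norm v = 1" and "u \<noteq> v" "u \<noteq> - v"
  obtains e where "e \<bullet> e = 1" "u \<bullet> e = 0" "0 < arccos (u \<bullet> v)" "arccos (u \<bullet> v) < pi"
    "v = cos (arccos (u \<bullet> v)) *\<^sub>R u + sin (arccos (u \<bullet> v)) *\<^sub>R e"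
proof -
  define c \<theta> where "c = u \<bullet> v" and "\<theta> = arccos (u \<bullet> v)"
  have uu: "u \<bullet> u = 1" and vv: "v \<bullet> v = 1"
    using u v by (simp_all add: dot_square_norm)
  have "0 < (norm (u - v))\<^sup>2" "0 < (norm (u + v))\<^sup>2"
    using assms(3,4) by (simp_all add: add_eq_0_iff2)
  then have "-1 < c" "c < 1"
    unfolding power2_norm_eq_inner c_def by (simp_all add: inner_add inner_diff inner_commute uu vv)
  then have "0 < \<theta>" "\<theta> < pi" "cos \<theta> = c"
    using arccos_lt_bounded by (auto simp: \<theta>_def c_def)
  then have "0 < sin \<theta>"
    by (simp add: sin_gt_zero)
  define e where "e = (1 / sin \<theta>) *\<^sub>R (v - c *\<^sub>R u)"
  have "u \<bullet> e = 0"
    by (simp add: e_def inner_diff_right uu c_def)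
  have "(v - c *\<^sub>R u) \<bullet> (v - c *\<^sub>R u) = 1 - c\<^sup>2"
    by (simp add: inner_diff inner_commute uu vv c_def power2_eq_square)
  also have "\<dots> = (sin \<theta>)\<^sup>2"
    using \<open>cos \<theta> = c\<close> by (simp add: sin_squared_eq)
  finally have "e \<bullet> e = 1"
    using \<open>0 < sin \<theta>\<close> by (simp add: e_def power2_eq_square)
  moreover have "v = cos \<theta> *\<^sub>R u + sin \<theta> *\<^sub>R e"
    using \<open>0 < sin \<theta>\<close> \<open>cos \<theta> = c\<close> by (simp add: e_def)
  ultimately show ?thesis
    using that \<open>u \<bullet> e = 0\<close> \<open>0 < \<theta>\<close> \<open>\<theta> < pi\<close> by (simp add: \<theta>_def)
qed

lemma great_arc_exists:
  fixes u v :: "'a::euclidean_space"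
  assumes u: "norm u = 1" and v: "norm v = 1" and "u \<noteq> - v"
  obtains \<gamma> where "path \<gamma>" "pathstart \<gamma> = u" "pathfinish \<gamma> = v"
    "\<And>t. t \<in> {0..1} \<Longrightarrow> norm (\<gamma> t) = 1"
    "\<And>t. t \<in> {0..1} \<Longrightarrow> \<exists>\<alpha> \<beta>. 0 \<le> \<alpha> \<and> 0 \<le> \<beta> \<and> \<gamma> t = \<alpha> *\<^sub>R u + \<beta> *\<^sub>R v"
    "path_length \<gamma> \<le> ereal (arccos (u \<bullet> v))"
proof (cases "u = v")
  case True
  show ?thesis
  proof (rule that[of "\<lambda>t. u"])
    show "path_length (\<lambda>t. u) \<le> ereal (arccos (u \<bullet> v))"
      using True u by (intro path_length_le_Lipschitz) auto
    show "\<exists>\<alpha> \<beta>. 0 \<le> \<alpha> \<and> 0 \<le> \<beta> \<and> u = \<alpha> *\<^sub>R u + \<beta> *\<^sub>R v" for t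
      by (rule exI[of _ 1], rule exI[of _ 0]) simp
  qed (use True u in \<open>auto simp: pathstart_def pathfinish_def path_def\<close>)
next
  case False
  define \<theta> where "\<theta> = arccos (u \<bullet> v)"
  obtain e where ee: "e \<bullet> e = 1" and ue: "u \<bullet> e = 0" and "0 < \<theta>" "\<theta> < pi"
    and v_eq: "v = cos \<theta> *\<^sub>R u + sin \<theta> *\<^sub>R e"
    using unit_vectors_polar_frame[OF u v False \<open>u \<noteq> - v\<close>, folded \<theta>_def] .
  have uu: "u \<bullet> u = 1"
    using u by (simp add: dot_square_norm)
  have "0 < sin \<theta>"
    using \<open>0 < \<theta>\<close> \<open>\<theta> < pi\<close> by (simp add: sin_gt_zero)
  define \<gamma> where "\<gamma> t = cos (t * \<theta>) *\<^sub>R u + sin (t * \<theta>) *\<^sub>R e" for t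
  have "\<exists>\<alpha> \<beta>. 0 \<le> \<alpha> \<and> 0 \<le> \<beta> \<and> \<gamma> t = \<alpha> *\<^sub>R u + \<beta> *\<^sub>R v" if "t \<in> {0..1}" for t
  proof (intro exI conjI)
    have "0 \<le> t * \<theta>" "t * \<theta> \<le> \<theta>"
      using that \<open>0 < \<theta>\<close> mult_left_le_one_le[of \<theta> t] by (auto simp: mult.commute)
    then show "0 \<le> sin (\<theta> - t * \<theta>) / sin \<theta>" "0 \<le> sin (t * \<theta>) / sin \<theta>"
      using \<open>0 < sin \<theta>\<close> \<open>\<theta> < pi\<close> by (auto intro!: divide_nonneg_pos sin_ge_zero)
    have "sin (\<theta> - t * \<theta>) / sin \<theta> = cos (t * \<theta>) - cos \<theta> * (sin (t * \<theta>) / sin \<theta>)"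
      using \<open>0 < sin \<theta>\<close> by (simp add: sin_diff field_simps)
    then show "\<gamma> t = (sin (\<theta> - t * \<theta>) / sin \<theta>) *\<^sub>R u + (sin (t * \<theta>) / sin \<theta>) *\<^sub>R v"
      using \<open>0 < sin \<theta>\<close> by (simp add: \<gamma>_def v_eq scaleR_add_right scaleR_diff_left)
  qed
  moreover have "norm (\<gamma> t) = 1" for t
    using inner_circle_points[OF uu ee ue, of "t * \<theta>" "t * \<theta>"] by (simp add: \<gamma>_def norm_eq_sqrt_inner)
  moreover have "path_length \<gamma> \<le> ereal \<theta>"
    unfolding \<gamma>_def using \<open>0 < \<theta>\<close> \<open>\<theta> < pi\<close> by (intro path_length_circle_arc uu ee ue) auto
  moreover have "path \<gamma>"
    unfolding path_def \<gamma>_def by (intro continuous_intros)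
  moreover have "pathstart \<gamma> = u" "pathfinish \<gamma> = v"
    by (simp_all add: pathstart_def pathfinish_def \<gamma>_def v_eq)
  ultimately show ?thesis
    using that by (simp add: \<theta>_def)
qed

section \<open>Nearest point projection onto a closed convex set\<close>

lemma closest_point_eqI:
  fixes S :: "'a::euclidean_space set"
  assumes "convex S" "closed S" "p \<in> S" and obtuse: "\<And>z. z \<in> S \<Longrightarrow> (a - p) \<bullet> (z - p) \<le> 0"
  shows "closest_point S a = p"
proof -
  have "dist a p \<le> dist a z" if "z \<in> S" for z
  proof -
    have "(dist a z)\<^sup>2 = (dist a p)\<^sup>2 - 2 * ((a - p) \<bullet> (z - p)) + (norm (z - p))\<^sup>2"
      unfolding dist_norm power2_norm_eq_inner by (simp add: inner_diff inner_commute algebra_simps)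
    then have "(dist a p)\<^sup>2 \<le> (dist a z)\<^sup>2"
      using obtuse[OF that] zero_le_power2[of "norm (z - p)"] by linarith
    then show ?thesis
      by (rule power2_le_imp_le) simp
  qed
  then show ?thesis
    using closest_point_unique[OF assms(1-3), of a] by auto
qed

lemma closest_point_along_normal:
  fixes S :: "'a::euclidean_space set"
  assumes "convex S" "closed S" "S \<noteq> {}" "0 \<le> s"
  shows "closest_point S (closest_point S x + s *\<^sub>R (x - closest_point S x)) = closest_point S x"
proof (rule closest_point_eqI[OF assms(1,2)])
  show "closest_point S x \<in> S"
    using assms closest_point_in_set by blast
  show "(closest_point S x + s *\<^sub>R (x - closest_point S x) - closest_point S x)
          \<bullet> (z - closest_point S x) \<le> 0" if "z \<in> S" for z
    using closest_point_dot[OF assms(1,2) that, of x] assms(4) by (simp add: mult_nonneg_nonpos)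
qed

lemma closest_point_firmly_nonexpansive:
  fixes S :: "'a::euclidean_space set"
  assumes "convex S" "closed S" "S \<noteq> {}"
  shows "(dist (closest_point S x) (closest_point S y))\<^sup>2
           + (dist (x - closest_point S x) (y - closest_point S y))\<^sup>2 \<le> (dist x y)\<^sup>2"
proof -
  define p q where "p = closest_point S x" and "q = closest_point S y"
  have "p \<in> S" "q \<in> S"
    using assms closest_point_in_set by (auto simp: p_def q_def)
  then have "(x - p) \<bullet> (q - p) \<le> 0" "(y - q) \<bullet> (p - q) \<le> 0"
    using closest_point_dot[OF assms(1,2)] by (auto simp: p_def q_def)
  moreover have "(dist x y)\<^sup>2 = (dist p q)\<^sup>2 + (dist (x - p) (y - q))\<^sup>2
                   - 2 * ((x - p) \<bullet> (q - p)) - 2 * ((y - q) \<bullet> (p - q))"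
    unfolding dist_norm power2_norm_eq_inner by (simp add: inner_diff inner_commute algebra_simps)
  ultimately show ?thesis
    by (simp add: p_def q_def)
qed

lemma path_closest_point:
  fixes S :: "'a::euclidean_space set"
  assumes "convex S" "closed S" "S \<noteq> {}" "path g"
  shows "path (\<lambda>t. closest_point S (g t))" "path (\<lambda>t. g t - closest_point S (g t))"
proof -
  show "path (\<lambda>t. closest_point S (g t))"
    unfolding path_def
    by (rule continuous_on_compose2[OF continuous_on_closest_point[OF assms(1-3)]])
      (use assms(4) in \<open>auto simp: path_def\<close>)
  then show "path (\<lambda>t. g t - closest_point S (g t))"
    using assms(4) unfolding path_def by (intro continuous_intros)
qed

lemma frontier_Qo:
  fixes S :: "'a::euclidean_space set"
  assumes S: "convex S" "closed S" "S \<noteq> {}"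
  shows "frontier (Qo S) = {x. dist x (closest_point S x) = 1}"
proof -
  let ?d = "\<lambda>x. dist x (closest_point S x)"
  have Qo: "Qo S = {x. ?d x \<le> 1}"
    unfolding Qo_def using setdist_closest_point[OF S(2,3)] by simp
  have cont: "continuous_on UNIV ?d"
    using continuous_on_closest_point[OF S] by (intro continuous_intros)
  have "closed (Qo S)"
    unfolding Qo using cont by (intro closed_Collect_le continuous_on_const)
  have "{x. ?d x < 1} \<subseteq> interior (Qo S)"
    using cont by (intro interior_maximal open_Collect_less continuous_on_const) (auto simp: Qo)
  moreover have "x \<notin> interior (Qo S)" if x: "?d x = 1" for x
  proof
    assume "x \<in> interior (Qo S)"
    then obtain e where e: "e > 0" "ball x e \<subseteq> Qo S"
      by (meson mem_interior)
    \<comment> \<open>Push x further out along its normal: the distance to S grows beyond 1.\<close>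
    define p where "p = closest_point S x"
    define y where "y = p + (1 + e / 2) *\<^sub>R (x - p)"
    have "closest_point S y = p"
      unfolding y_def p_def using e by (intro closest_point_along_normal S) auto
    moreover have "norm (x - p) = 1"
      using x by (simp add: p_def dist_norm)
    ultimately have far: "?d y = 1 + e / 2"
      using e by (simp add: y_def dist_norm)
    have "y - x = (e / 2) *\<^sub>R (x - p)"
      by (simp add: y_def algebra_simps)
    then have "dist x y = e / 2"
      using \<open>norm (x - p) = 1\<close> e by (simp add: dist_norm norm_minus_commute[of x y])
    then have "y \<in> Qo S"
      using e by auto
    then show False
      using far e Qo by simp
  qed
  ultimately show ?thesis
    unfolding frontier_def closure_closed[OF \<open>closed (Qo S)\<close>] by (force simp: Qo)
qed

lemma grid_sum_projection_pythagoras: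
  fixes S :: "'a::euclidean_space set"
  assumes "convex S" "closed S" "S \<noteq> {}"
  shows "sqrt ((grid_sum N (\<lambda>t. closest_point S (g t)))\<^sup>2
               + (grid_sum N (\<lambda>t. g t - closest_point S (g t)))\<^sup>2) \<le> grid_sum N g"
proof -
  define x where "x i = g (real i / real N)" for i
  define a b where "a i = dist (closest_point S (x i)) (closest_point S (x (Suc i)))"
    and "b i = dist (x i - closest_point S (x i)) (x (Suc i) - closest_point S (x (Suc i)))" for i
  have "sqrt ((\<Sum>i<N. a i)\<^sup>2 + (\<Sum>i<N. b i)\<^sup>2) = norm (\<Sum>i<N. (a i, b i))"
    by (simp add: norm_prod_def fst_sum snd_sum)
  also have "\<dots> \<le> (\<Sum>i<N. norm (a i, b i))"
    by (rule norm_sum)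
  also have "\<dots> \<le> (\<Sum>i<N. dist (x i) (x (Suc i)))"
  proof (intro sum_mono)
    fix i
    show "norm (a i, b i) \<le> dist (x i) (x (Suc i))"
      unfolding norm_Pair a_def b_def
      using closest_point_firmly_nonexpansive[OF assms, of "x i" "x (Suc i)"]
      by (intro real_le_lsqrt) auto
  qed
  finally show ?thesis
    by (simp add: grid_sum_def x_def a_def b_def)
qed

lemma path_length_ge_normal_angle:
  fixes S :: "'a::euclidean_space set"
  assumes S: "convex S" "closed S" "S \<noteq> {}" and "path g"
    and unit: "\<And>t. t \<in> {0..1} \<Longrightarrow> dist (g t) (closest_point S (g t)) = 1"
  shows "ereal (arccos ((g 0 - closest_point S (g 0)) \<bullet> (g 1 - closest_point S (g 1))))
           \<le> path_length g"
proof -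
  define c where "c t = g t - closest_point S (g t)" for t
  have c_cont: "continuous_on {0..1} c"
    using path_closest_point(2)[OF S \<open>path g\<close>] by (simp add: c_def path_def)
  have c_unit: "norm (c t) = 1" if "t \<in> {0..1}" for t
    using unit[OF that] by (simp add: c_def dist_norm)
  have c_le_g: "grid_sum N c \<le> grid_sum N g" for N
    using grid_sum_projection_pythagoras[OF S, of N g]
      real_sqrt_ge_abs2[of "grid_sum N c" "grid_sum N (\<lambda>t. closest_point S (g t))"]
      abs_ge_self[of "grid_sum N c"]
    unfolding c_def by linarith
  have "ereal (arccos (c 0 \<bullet> c 1)) \<le> path_length g"
  proof (rule path_length_ge_if_eventually)
    fix z :: real assume "0 < z" "z < 1"
    with c_cont c_unit have "\<forall>\<^sub>F N in sequentially. z * arccos (c 0 \<bullet> c 1) \<le> grid_sum N c"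
      by (rule grid_sum_ge_arccos_eventually)
    then show "\<forall>\<^sub>F N in sequentially. z * arccos (c 0 \<bullet> c 1) \<le> grid_sum N g"
      by (rule eventually_mono) (use c_le_g order_trans in blast)
  qed
  then show ?thesis
    by (simp add: c_def)
qed

lemma scaled_sqrt_sum_squares_le:
  fixes z a b x y :: real
  assumes "0 \<le> z" "z \<le> 1" "0 \<le> a" "0 \<le> b" "a \<le> x" "z * b \<le> y"
  shows "z * sqrt (a\<^sup>2 + b\<^sup>2) \<le> sqrt (x\<^sup>2 + y\<^sup>2)"
proof -
  have "z * a \<le> x"
    using assms mult_left_le_one_le[of a z] by linarith
  have "z * sqrt (a\<^sup>2 + b\<^sup>2) = sqrt (z\<^sup>2 * (a\<^sup>2 + b\<^sup>2))"
    using assms(1) by (simp add: real_sqrt_mult)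
  also have "\<dots> = sqrt ((z * a)\<^sup>2 + (z * b)\<^sup>2)"
    by (simp add: power_mult_distrib algebra_simps)
  also have "\<dots> \<le> sqrt (x\<^sup>2 + y\<^sup>2)"
    using assms \<open>z * a \<le> x\<close> by (intro real_sqrt_le_mono add_mono power_mono) auto
  finally show ?thesis .
qed

lemma path_length_gt_normal_angle:
  fixes S :: "'a::euclidean_space set"
  assumes S: "convex S" "closed S" "S \<noteq> {}" and "path g"
    and unit: "\<And>t. t \<in> {0..1} \<Longrightarrow> dist (g t) (closest_point S (g t)) = 1"
    and "t \<in> {0..1}" and moves: "closest_point S (g t) \<noteq> closest_point S (g 0)"
  shows "ereal (arccos ((g 0 - closest_point S (g 0)) \<bullet> (g 1 - closest_point S (g 1))))
           < path_length g"
proof -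
  define p c where "p s = closest_point S (g s)" and "c s = g s - closest_point S (g s)" for s
  define \<theta> where "\<theta> = arccos (c 0 \<bullet> c 1)"
  define a where "a = dist (p 0) (p t) / 2"
  have c_unit: "norm (c s) = 1" if "s \<in> {0..1}" for s
    using unit[OF that] by (simp add: c_def dist_norm)
  have "0 \<le> \<theta>"
    unfolding \<theta>_def by (intro arccos_lbound inner_unit_bounds c_unit) auto
  have "0 < a" "a < dist (p 0) (p t)"
    using moves by (simp_all add: a_def p_def)
  have "\<theta> < sqrt (a\<^sup>2 + \<theta>\<^sup>2)"
    using \<open>0 < a\<close> \<open>0 \<le> \<theta>\<close> by (intro real_less_rsqrt) simp
  then have "ereal \<theta> < ereal (sqrt (a\<^sup>2 + \<theta>\<^sup>2))"
    by simp
  also have "\<dots> \<le> path_length g"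
  proof (rule path_length_ge_if_eventually)
    fix z :: real assume z: "0 < z" "z < 1"
    have "\<forall>\<^sub>F N in sequentially. z * \<theta> \<le> grid_sum N c"
      unfolding \<theta>_def using path_closest_point(2)[OF S \<open>path g\<close>] c_unit z
      by (intro grid_sum_ge_arccos_eventually) (auto simp: c_def path_def)
    moreover have "\<forall>\<^sub>F N in sequentially. a < grid_sum N p"
      using path_closest_point(1)[OF S \<open>path g\<close>] \<open>t \<in> {0..1}\<close> \<open>a < dist (p 0) (p t)\<close>
      by (intro grid_sum_gt_eventually) (auto simp: p_def path_def)
    ultimately show "\<forall>\<^sub>F N in sequentially. z * sqrt (a\<^sup>2 + \<theta>\<^sup>2) \<le> grid_sum N g"
    proof eventually_elim
      case (elim N)
      have "z * sqrt (a\<^sup>2 + \<theta>\<^sup>2) \<le> sqrt ((grid_sum N p)\<^sup>2 + (grid_sum N c)\<^sup>2)"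
        using elim z \<open>0 < a\<close> \<open>0 \<le> \<theta>\<close> by (intro scaled_sqrt_sum_squares_le) auto
      also have "\<dots> \<le> grid_sum N g"
        using grid_sum_projection_pythagoras[OF S, of N g] by (simp add: p_def[abs_def] c_def[abs_def])
      finally show ?case .
    qed
  qed
  finally show ?thesis
    by (simp add: \<theta>_def c_def)
qed

section \<open>Faces of polyhedra and pointed polyhedral cones\<close>

lemma polyhedron_rel_interior_face_exists:
  fixes S :: "'a::euclidean_space set"
  assumes "polyhedron S" "x \<in> S"
  shows "\<exists>F. F face_of S \<and> x \<in> rel_interior F"
  using assms
proof (induction "nat (aff_dim S + 1)" arbitrary: S rule: less_induct)
  case less
  show ?case
  proof (cases "x \<in> rel_interior S")
    case True
    then show ?thesis
      using less.prems face_of_refl polyhedron_imp_convex by blast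
  next
    case False
    then have "x \<in> \<Union> {F. F facet_of S}"
      using rel_boundary_of_polyhedron[OF less.prems(1)] less.prems(2) by blast
    then obtain C where C: "C facet_of S" "x \<in> C"
      by blast
    then have "polyhedron C" "C face_of S"
      using face_of_polyhedron_polyhedron[OF less.prems(1)] facet_of_imp_face_of by blast+
    have "aff_dim C = aff_dim S - 1" "C \<noteq> {}"
      using C by (auto simp: facet_of_def)
    then have "nat (aff_dim C + 1) < nat (aff_dim S + 1)"
      using aff_dim_negative_iff[of C] by linarith
    then obtain F where "F face_of C" "x \<in> rel_interior F"
      using less.hyps[OF _ \<open>polyhedron C\<close> C(2)] by blast
    then show ?thesis
      using face_of_trans[OF _ \<open>C face_of S\<close>] by blast
  qed
qed

lemma face_of_eq_if_meets_rel_interior: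
  fixes S :: "'a::euclidean_space set"
  assumes "F face_of S" "G face_of S" "aff_dim F = aff_dim G" "x \<in> G" "x \<in> rel_interior F"
  shows "F = G"
proof (rule ccontr)
  assume "F \<noteq> G"
  have "F \<subseteq> G"
    by (rule subset_of_face_of[OF assms(2) face_of_imp_subset[OF assms(1)]]) (use assms(4,5) in blast)
  then have "F face_of G"
    by (rule face_of_subset[OF assms(1) _ face_of_imp_subset[OF assms(2)]])
  then have "aff_dim F < aff_dim G"
    by (rule face_of_aff_dim_lt[OF face_of_imp_convex[OF assms(2)] _ \<open>F \<noteq> G\<close>])
  then show False
    using assms(3) by simp
qed

lemma normal_at_rel_interior_orthogonal:
  fixes F :: "'a::euclidean_space set"
  assumes "convex F" "p \<in> rel_interior F" and normal: "\<And>q. q \<in> F \<Longrightarrow> v \<bullet> (q - p) \<le> 0"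
    and "x \<in> affine hull F"
  shows "v \<bullet> (x - p) = 0"
proof -
  \<comment> \<open>Every point y of the affine hull can be pushed past p into F.\<close>
  have ge: "0 \<le> v \<bullet> (y - p)" if y: "y \<in> affine hull F" for y
  proof -
    obtain e where "e > 1" and e: "\<forall>d. d > 1 \<and> d \<le> e \<longrightarrow> (1 - d) *\<^sub>R y + d *\<^sub>R p \<in> F"
      using convex_rel_interior_if[OF assms(1,2)] y by blast
    then have "v \<bullet> ((1 - e) *\<^sub>R y + e *\<^sub>R p - p) \<le> 0"
      by (intro normal) auto
    also have "(1 - e) *\<^sub>R y + e *\<^sub>R p - p = (1 - e) *\<^sub>R (y - p)"
      by (simp add: scaleR_diff_right scaleR_diff_left)
    finally have "(1 - e) * (v \<bullet> (y - p)) \<le> 0"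
      by simp
    then show ?thesis
      using \<open>e > 1\<close> by (simp add: mult_le_0_iff)
  qed
  have "p \<in> affine hull F"
    using assms(2) rel_interior_subset by (blast intro: hull_inc)
  then have "p - 1 *\<^sub>R (x - p) \<in> affine hull F"
    using assms(4) by (intro mem_affine_3_minus2 affine_affine_hull)
  then have "0 \<le> v \<bullet> (p - 1 *\<^sub>R (x - p) - p)"
    by (rule ge)
  moreover have "0 \<le> v \<bullet> (x - p)"
    using assms(4) by (rule ge)
  ultimately show ?thesis
    by (simp add: inner_diff_right)
qed

definition unit_facet_normal :: "'a::euclidean_space set \<Rightarrow> 'a set \<Rightarrow> 'a \<Rightarrow> bool" where
  "unit_facet_normal Q F n \<longleftrightarrow> norm n = 1 \<and> Q \<subseteq> {x. n \<bullet> x \<le> 0} \<and>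
     F = Q \<inter> {x. n \<bullet> x = 0} \<and> affine hull F = {x. n \<bullet> x = 0}"

locale pointed_polyhedral_cone =
  fixes Q :: "'a::euclidean_space set"
  assumes polyhedron: "polyhedron Q" and cone: "cone Q" and full_dim: "aff_dim Q = int DIM('a)"
    and apex: "{0} face_of Q"
begin

lemma convex: "convex Q"
  using polyhedron polyhedron_imp_convex by blast

lemma closed: "closed Q"
  using polyhedron polyhedron_imp_closed by blast

lemma zero_in: "0 \<in> Q"
  using apex face_of_imp_subset by blast

lemma nonempty: "Q \<noteq> {}"
  using zero_in by blast

lemma not_subset_hyperplane:
  assumes "n \<noteq> 0"
  shows "\<not> Q \<subseteq> {x. n \<bullet> x = 0}"
  using aff_dim_subset[of Q "{x. n \<bullet> x = 0}"] assms full_dim by auto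

lemma unit_facet_normal_exists:
  assumes "F face_of Q" "aff_dim F = int DIM('a) - 1"
  obtains n where "unit_facet_normal Q F n"
proof -
  have "F \<noteq> {}"
    using assms(2) DIM_positive[where 'a='a] by (auto simp: aff_dim_empty[symmetric])
  then have "F facet_of Q"
    using assms full_dim by (simp add: facet_of_def)
  then obtain a b where ab: "a \<noteq> 0" "Q \<subseteq> {x. a \<bullet> x \<le> b}" "F = Q \<inter> {x. a \<bullet> x = b}"
    using facet_of_polyhedron[OF polyhedron] by blast
  \<comment> \<open>The supporting hyperplane of a facet of a cone passes through the apex.\<close>
  obtain y where "y \<in> F"
    using \<open>F \<noteq> {}\<close> by blast
  then have "2 *\<^sub>R y \<in> Q" "a \<bullet> y = b"
    using cone ab(3) unfolding cone_def by auto
  then have "2 * b \<le> b" "0 \<le> b"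
    using ab(2) zero_in by auto
  then have "b = 0"
    by linarith
  define n where "n = a /\<^sub>R norm a"
  have "norm n = 1"
    using ab(1) by (simp add: n_def)
  have n_inner: "n \<bullet> x = (a \<bullet> x) / norm a" for x
    by (simp add: n_def divide_inverse mult.commute)
  have sign: "n \<bullet> x \<le> 0 \<longleftrightarrow> a \<bullet> x \<le> 0" "n \<bullet> x = 0 \<longleftrightarrow> a \<bullet> x = 0" for x
    using ab(1) by (simp_all add: n_inner divide_le_0_iff)
  have F: "F = Q \<inter> {x. n \<bullet> x = 0}"
    using ab(3) \<open>b = 0\<close> sign by auto
  have "affine hull F = {x. n \<bullet> x = 0}"
  proof (rule affine_dim_equal)
    show "affine hull F \<subseteq> {x. n \<bullet> x = 0}"
      using F affine_hyperplane by (intro hull_minimal) auto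
    show "aff_dim (affine hull F) = aff_dim {x. n \<bullet> x = 0}"
      using assms(2) ab(1) by (simp add: n_def)
  qed (use \<open>F \<noteq> {}\<close> affine_hyperplane in auto)
  moreover have "Q \<subseteq> {x. n \<bullet> x \<le> 0}"
    using ab(2) \<open>b = 0\<close> sign by auto
  ultimately show ?thesis
    using that \<open>norm n = 1\<close> F unfolding unit_facet_normal_def by blast
qed

lemma unit_facet_normal_unique:
  assumes n: "unit_facet_normal Q F n" and p: "p \<in> rel_interior F"
    and v: "norm v = 1" and normal: "\<And>q. q \<in> Q \<Longrightarrow> v \<bullet> (q - p) \<le> 0"
  shows "v = n"
proof -
  have Qn: "Q \<subseteq> {x. n \<bullet> x \<le> 0}" and F: "F = Q \<inter> {x. n \<bullet> x = 0}"
    and H: "affine hull F = {x. n \<bullet> x = 0}" and "norm n = 1"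
    using n by (auto simp: unit_facet_normal_def)
  have "convex F"
    using F convex by (simp add: convex_Int convex_hyperplane)
  have "p \<in> F"
    using p rel_interior_subset by blast
  have perp: "v \<bullet> w = 0" if "n \<bullet> w = 0" for w
  proof -
    have "p + w \<in> affine hull F"
      using \<open>p \<in> F\<close> F H that by (auto simp: inner_add_right)
    then have "v \<bullet> (p + w - p) = 0"
      using normal F by (intro normal_at_rel_interior_orthogonal[OF \<open>convex F\<close> p]) auto
    then show ?thesis
      by simp
  qed
  have nn: "n \<bullet> n = 1" and vv: "v \<bullet> v = 1"
    using \<open>norm n = 1\<close> v by (simp_all add: dot_square_norm)
  define w where "w = v - (v \<bullet> n) *\<^sub>R n"
  have "n \<bullet> w = 0"
    by (simp add: w_def inner_diff_right nn inner_commute)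
  then have "w \<bullet> w = 0"
    using perp by (simp add: w_def inner_diff_left)
  then have vn: "v = (v \<bullet> n) *\<^sub>R n"
    by (simp add: w_def)
  then have "(v \<bullet> n)\<^sup>2 = 1"
    using vv by (metis inner_scaleR_right power2_eq_square)
  moreover have "v \<bullet> n \<noteq> -1"
  proof
    assume "v \<bullet> n = -1"
    then have "n \<bullet> q \<ge> 0" if "q \<in> Q" for q
      using normal[OF that] vn \<open>p \<in> F\<close> F by (auto simp: inner_diff_right)
    then have "Q \<subseteq> {x. n \<bullet> x = 0}"
      using Qn by fastforce
    moreover have "n \<noteq> 0"
      using \<open>norm n = 1\<close> by auto
    ultimately show False
      using not_subset_hyperplane by blast
  qed
  ultimately have "v \<bullet> n = 1"
    by (simp add: power2_eq_1_iff)
  then show ?thesis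
    using vn by simp
qed

lemma frontier_Qo_eq: "frontier (Qo Q) = {x. dist x (closest_point Q x) = 1}"
  using frontier_Qo[OF convex closed nonempty] .

lemma Gset_subset: "Gset Q F \<subseteq> {x. dist x (closest_point Q x) = 1}"
proof -
  have "Gset Q F \<subseteq> closure (frontier (Qo Q))"
    unfolding Gset_def by (intro closure_mono) blast
  then show ?thesis
    by (simp add: frontier_Qo_eq[symmetric])
qed

lemma Rset_subset: "Rset Q \<subseteq> {x. dist x (closest_point Q x) = 1}"
  unfolding Rset_def using Gset_subset by blast

lemma in_GsetI:
  assumes "closest_point Q x \<in> rel_interior F" "dist x (closest_point Q x) = 1"
  shows "x \<in> Gset Q F"
  unfolding Gset_def using assms frontier_Qo_eq closure_subset by fastforce

lemma polar_unit_in_Gset_zero: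
  assumes "norm x = 1" "\<And>q. q \<in> Q \<Longrightarrow> x \<bullet> q \<le> 0"
  shows "x \<in> Gset Q {0}"
proof (rule in_GsetI)
  have "closest_point Q x = 0"
    using assms(2) by (intro closest_point_eqI convex closed zero_in) simp
  then show "closest_point Q x \<in> rel_interior {0}" "dist x (closest_point Q x) = 1"
    using assms(1) by simp_all
qed

lemma Gset_facet:
  assumes n: "unit_facet_normal Q F n" and x: "x \<in> Gset Q F"
  shows "closest_point Q x \<in> F" "x - closest_point Q x = n"
proof -
  have F: "F = Q \<inter> {x. n \<bullet> x = 0}"
    using n by (simp add: unit_facet_normal_def)
  define T where "T = closest_point Q -` F \<inter> (\<lambda>x. x - closest_point Q x) -` {n}"
  have "closed T"
    unfolding T_def F using continuous_on_closest_point[OF convex closed nonempty]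
    by (intro closed_Int closed_vimage closed_hyperplane closed continuous_intros) auto
  moreover have "closest_point Q -` rel_interior F \<inter> frontier (Qo Q) \<subseteq> T"
  proof
    fix y assume y: "y \<in> closest_point Q -` rel_interior F \<inter> frontier (Qo Q)"
    have "y - closest_point Q y = n"
      using y frontier_Qo_eq closest_point_dot[OF convex closed]
      by (intro unit_facet_normal_unique[OF n, of "closest_point Q y"]) (auto simp: dist_norm)
    then show "y \<in> T"
      using y rel_interior_subset by (auto simp: T_def)
  qed
  ultimately have "Gset Q F \<subseteq> T"
    unfolding Gset_def by (rule closure_minimal[rotated])
  then show "closest_point Q x \<in> F" "x - closest_point Q x = n"
    using x by (auto simp: T_def)
qed

lemma unit_facet_normal_in_Gset:
  assumes n: "unit_facet_normal Q F n"
  shows "n \<in> Gset Q F"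
proof -
  have n1: "norm n = 1" and Qn: "Q \<subseteq> {x. n \<bullet> x \<le> 0}" and F: "F = Q \<inter> {x. n \<bullet> x = 0}"
    using n by (auto simp: unit_facet_normal_def)
  \<comment> \<open>n is the limit of the points p + n with p in the relative interior of F tending to the apex.\<close>
  have "(+) n ` rel_interior F \<subseteq> closest_point Q -` rel_interior F \<inter> frontier (Qo Q)"
  proof
    fix y assume "y \<in> (+) n ` rel_interior F"
    then obtain p where p: "p \<in> rel_interior F" "y = n + p"
      by blast
    then have "p \<in> F"
      using rel_interior_subset by blast
    then have "closest_point Q y = p"
      using F Qn p(2) by (intro closest_point_eqI convex closed) (auto simp: inner_diff_right)
    then show "y \<in> closest_point Q -` rel_interior F \<inter> frontier (Qo Q)"
      using p n1 frontier_Qo_eq by (simp add: dist_norm)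
  qed
  moreover have "0 \<in> closure (rel_interior F)"
  proof -
    have "convex F"
      using F by (simp add: convex_Int convex_hyperplane convex)
    moreover have "0 \<in> F"
      using F zero_in by simp
    ultimately show ?thesis
      using convex_closure_rel_interior closure_subset by blast
  qed
  then have "n \<in> closure ((+) n ` rel_interior F)"
    using closure_translation[of n "rel_interior F"] by force
  ultimately show ?thesis
    unfolding Gset_def using closure_mono by blast
qed

lemma facet_contains_apex:
  assumes "F face_of Q" "aff_dim F = int DIM('a) - 1"
  shows "0 \<in> F"
proof -
  obtain n where "unit_facet_normal Q F n"
    using unit_facet_normal_exists[OF assms] .
  then show ?thesis
    using zero_in by (simp add: unit_facet_normal_def)
qed

lemma DIM_ne_1_if_distinct_facets:
  assumes "F1 face_of Q" "aff_dim F1 = int DIM('a) - 1"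
    and "F2 face_of Q" "aff_dim F2 = int DIM('a) - 1" and "F1 \<noteq> F2"
  shows "DIM('a) \<noteq> 1"
proof
  assume "DIM('a) = 1"
  then have "aff_dim F1 = 0" "aff_dim F2 = 0"
    using assms(2,4) by simp_all
  then obtain a1 a2 where "F1 = {a1}" "F2 = {a2}"
    by (meson aff_dim_eq_0)
  moreover have "0 \<in> F1" "0 \<in> F2"
    using facet_contains_apex[OF assms(1,2)] facet_contains_apex[OF assms(3,4)] .
  ultimately show False
    using assms(5) by simp
qed

lemma Gset_zero_subset_Rset:
  assumes "DIM('a) \<noteq> 1"
  shows "Gset Q {0} \<subseteq> Rset Q"
proof -
  have "aff_dim ({0} :: 'a set) \<noteq> int DIM('a) - 1"
    using assms by simp
  then show ?thesis
    unfolding Rset_def using apex by blast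
qed

lemma unit_facet_normal_in_bdry_comp:
  assumes "DIM('a) \<noteq> 1" "unit_facet_normal Q F n"
  shows "n \<in> bdry_comp Q F"
proof -
  have "n \<in> Gset Q {0}"
    using assms(2) by (intro polar_unit_in_Gset_zero) (auto simp: unit_facet_normal_def)
  then show ?thesis
    unfolding bdry_comp_def
    using Gset_zero_subset_Rset[OF assms(1)] unit_facet_normal_in_Gset[OF assms(2)] by blast
qed

lemma bdry_comp_Int_sphere:
  assumes "DIM('a) \<noteq> 1" and n: "unit_facet_normal Q F n"
  shows "bdry_comp Q F \<inter> sphere 0 1 = {n}"
proof
  show "{n} \<subseteq> bdry_comp Q F \<inter> sphere 0 1"
    using unit_facet_normal_in_bdry_comp[OF assms] n by (simp add: unit_facet_normal_def)
  show "bdry_comp Q F \<inter> sphere 0 1 \<subseteq> {n}"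
  proof
    fix x assume x: "x \<in> bdry_comp Q F \<inter> sphere 0 1"
    define p where "p = closest_point Q x"
    have "p \<in> F" "x = p + n"
      using Gset_facet[OF n] x by (auto simp: bdry_comp_def p_def algebra_simps)
    \<comment> \<open>p is orthogonal to n, so x can only be a unit vector if p = 0.\<close>
    then have "x \<bullet> x = p \<bullet> p + n \<bullet> n"
      using n by (simp add: unit_facet_normal_def inner_add inner_commute)
    then have "p \<bullet> p = 0"
      using x n by (simp add: unit_facet_normal_def dot_square_norm)
    then show "x \<in> {n}"
      using \<open>x = p + n\<close> by simp
  qed
qed

lemma path_length_between_facets:
  assumes n1: "unit_facet_normal Q F1 n1" and n2: "unit_facet_normal Q F2 n2"
    and g: "path g" "path_image g \<subseteq> Rset Q"
      "pathstart g \<in> bdry_comp Q F1" "pathfinish g \<in> bdry_comp Q F2"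
  shows "ereal (arccos (n1 \<bullet> n2)) \<le> path_length g"
    and "t \<in> {0..1} \<Longrightarrow> closest_point Q (g t) \<noteq> closest_point Q (g 0)
           \<Longrightarrow> ereal (arccos (n1 \<bullet> n2)) < path_length g"
proof -
  have unit: "dist (g t) (closest_point Q (g t)) = 1" if "t \<in> {0..1}" for t
    using g(2) Rset_subset that unfolding path_image_def by blast
  have "g 0 - closest_point Q (g 0) = n1" "g 1 - closest_point Q (g 1) = n2"
    using g(3,4) Gset_facet(2)[OF n1] Gset_facet(2)[OF n2]
    by (auto simp: bdry_comp_def pathstart_def pathfinish_def)
  then show "ereal (arccos (n1 \<bullet> n2)) \<le> path_length g"
    and "t \<in> {0..1} \<Longrightarrow> closest_point Q (g t) \<noteq> closest_point Q (g 0)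
           \<Longrightarrow> ereal (arccos (n1 \<bullet> n2)) < path_length g"
    using path_length_ge_normal_angle[OF convex closed nonempty g(1) unit]
      path_length_gt_normal_angle[OF convex closed nonempty g(1) unit, of t]
    by simp_all
qed

lemma intrinsic_setdist_between_facets:
  assumes "DIM('a) \<noteq> 1" and n1: "unit_facet_normal Q F1 n1" and n2: "unit_facet_normal Q F2 n2"
  shows "intrinsic_setdist (Rset Q) (bdry_comp Q F1) (bdry_comp Q F2) = ereal (arccos (n1 \<bullet> n2))"
proof (rule antisym)
  have "norm n1 = 1" "norm n2 = 1" and Qn: "Q \<subseteq> {x. n1 \<bullet> x \<le> 0}" "Q \<subseteq> {x. n2 \<bullet> x \<le> 0}"
    using n1 n2 by (auto simp: unit_facet_normal_def)
  have "n1 \<noteq> - n2"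
  proof
    assume "n1 = - n2"
    then have "Q \<subseteq> {x. n1 \<bullet> x = 0}"
      using Qn by force
    moreover have "n1 \<noteq> 0"
      using \<open>norm n1 = 1\<close> by auto
    ultimately show False
      using not_subset_hyperplane by blast
  qed
  then obtain \<gamma> where \<gamma>: "path \<gamma>" "pathstart \<gamma> = n1" "pathfinish \<gamma> = n2"
    "\<And>t. t \<in> {0..1} \<Longrightarrow> norm (\<gamma> t) = 1"
    "\<And>t. t \<in> {0..1} \<Longrightarrow> \<exists>\<alpha> \<beta>. 0 \<le> \<alpha> \<and> 0 \<le> \<beta> \<and> \<gamma> t = \<alpha> *\<^sub>R n1 + \<beta> *\<^sub>R n2"
    "path_length \<gamma> \<le> ereal (arccos (n1 \<bullet> n2))"
    using great_arc_exists \<open>norm n1 = 1\<close> \<open>norm n2 = 1\<close> by blast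
  \<comment> \<open>The great arc stays in the polar cone of Q, hence in the part of R over the apex.\<close>
  have "\<gamma> t \<in> Rset Q" if t: "t \<in> {0..1}" for t
  proof -
    obtain \<alpha> \<beta> where "0 \<le> \<alpha>" "0 \<le> \<beta>" "\<gamma> t = \<alpha> *\<^sub>R n1 + \<beta> *\<^sub>R n2"
      using \<gamma>(5)[OF t] by blast
    then have "\<gamma> t \<bullet> q \<le> 0" if "q \<in> Q" for q
      using that Qn by (force simp: inner_add_left intro: add_nonpos_nonpos mult_nonneg_nonpos)
    then show ?thesis
      using Gset_zero_subset_Rset[OF assms(1)] polar_unit_in_Gset_zero \<gamma>(4)[OF t] by blast
  qed
  then have "path_image \<gamma> \<subseteq> Rset Q"
    by (auto simp: path_image_def)
  then show "intrinsic_setdist (Rset Q) (bdry_comp Q F1) (bdry_comp Q F2) \<le> ereal (arccos (n1 \<bullet> n2))"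
    unfolding intrinsic_setdist_def
    using \<gamma> unit_facet_normal_in_bdry_comp[OF assms(1) n1] unit_facet_normal_in_bdry_comp[OF assms(1) n2]
    by (intro INF_lower2[of \<gamma>]) auto
  show "ereal (arccos (n1 \<bullet> n2)) \<le> intrinsic_setdist (Rset Q) (bdry_comp Q F1) (bdry_comp Q F2)"
    unfolding intrinsic_setdist_def using path_length_between_facets(1)[OF n1 n2]
    by (intro INF_greatest) auto
qed

lemma shortest_path_in_one_Gset:
  assumes F1: "F1 face_of Q" "aff_dim F1 = int DIM('a) - 1"
    and F2: "F2 face_of Q" "aff_dim F2 = int DIM('a) - 1" and "F1 \<noteq> F2"
    and g: "shortest_path_in (Rset Q) (bdry_comp Q F1) (bdry_comp Q F2) g"
  shows "\<exists>F. F face_of Q \<and> aff_dim F \<noteq> int DIM('a) - 1 \<and> path_image g \<subseteq> Gset Q F"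
proof -
  obtain n1 n2 where n1: "unit_facet_normal Q F1 n1" and n2: "unit_facet_normal Q F2 n2"
    using unit_facet_normal_exists F1 F2 by metis
  have dim: "DIM('a) \<noteq> 1"
    using DIM_ne_1_if_distinct_facets F1 F2 \<open>F1 \<noteq> F2\<close> by blast
  have path: "path g" "path_image g \<subseteq> Rset Q"
      "pathstart g \<in> bdry_comp Q F1" "pathfinish g \<in> bdry_comp Q F2"
    and "path_length g = ereal (arccos (n1 \<bullet> n2))"
    using g intrinsic_setdist_between_facets[OF dim n1 n2] by (auto simp: shortest_path_in_def)
  \<comment> \<open>A moving projection would make g strictly longer than the distance.\<close>
  define p where "p = closest_point Q (g 0)"
  have const: "closest_point Q (g t) = p" if "t \<in> {0..1}" for t
    using path_length_between_facets(2)[OF n1 n2 path that] \<open>path_length g = _\<close>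
    by (auto simp: p_def)
  obtain F where F: "F face_of Q" "p \<in> rel_interior F"
    using polyhedron_rel_interior_face_exists[OF polyhedron] closest_point_in_set[OF closed nonempty]
    by (force simp: p_def)
  have sub: "path_image g \<subseteq> Gset Q F"
    using const F(2) path(2) Rset_subset by (force simp: path_image_def intro: in_GsetI)
  have "closest_point Q (g 0) \<in> F1" "closest_point Q (g 1) \<in> F2"
    using path(3,4) Gset_facet(1)[OF n1] Gset_facet(1)[OF n2]
    by (auto simp: bdry_comp_def pathstart_def pathfinish_def)
  then have "p \<in> F1" "p \<in> F2"
    using const[of 1] by (simp_all add: p_def)
  then have "aff_dim F \<noteq> int DIM('a) - 1"
    using face_of_eq_if_meets_rel_interior[OF F(1) F1(1) _ _ F(2)]
      face_of_eq_if_meets_rel_interior[OF F(1) F2(1) _ _ F(2)] F1(2) F2(2) \<open>F1 \<noteq> F2\<close>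
    by metis
  then show ?thesis
    using F(1) sub by blast
qed

end

theorem mainTheorem7:
  fixes Q :: "'a::euclidean_space set"
    and F1 F2 :: "'a set"
  assumes "polyhedron Q" and "cone Q" and "aff_dim Q = int DIM('a)"
    and "{0} face_of Q"
    and "F1 face_of Q" and "aff_dim F1 = int DIM('a) - 1"
    and "F2 face_of Q" and "aff_dim F2 = int DIM('a) - 1"
    and "bdry_comp Q F1 \<noteq> bdry_comp Q F2"
  shows "(\<forall>g. shortest_path_in (Rset Q) (bdry_comp Q F1) (bdry_comp Q F2) g \<longrightarrow>
            (\<exists>F. F face_of Q \<and> aff_dim F \<noteq> int DIM('a) - 1 \<and> path_image g \<subseteq> Gset Q F))
         \<and> intrinsic_setdist (Rset Q) (bdry_comp Q F1) (bdry_comp Q F2)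
           = ereal (sphere_setdist (bdry_comp Q F1 \<inter> sphere 0 1) (bdry_comp Q F2 \<inter> sphere 0 1))"
proof -
  interpret pointed_polyhedral_cone Q
    using assms(1-4) by unfold_locales
  have "F1 \<noteq> F2"
    using assms(9) by blast
  obtain n1 n2 where n1: "unit_facet_normal Q F1 n1" and n2: "unit_facet_normal Q F2 n2"
    using unit_facet_normal_exists assms(5-8) by metis
  have dim: "DIM('a) \<noteq> 1"
    using DIM_ne_1_if_distinct_facets assms(5-8) \<open>F1 \<noteq> F2\<close> by blast
  show ?thesis
    using shortest_path_in_one_Gset[OF assms(5-8) \<open>F1 \<noteq> F2\<close>]
      intrinsic_setdist_between_facets[OF dim n1 n2]
      bdry_comp_Int_sphere[OF dim n1] bdry_comp_Int_sphere[OF dim n2]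
    by simp
qed

end
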